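(* Let $n\ge2$, $1\le k\le n-1$ and $n-1\ge m_1>\dots>m_k\ge1$. Let the complement of $\{n-m_1,\dots,n-m_k\}$ in $\{1,\dots,n\}$ be $\{j_1<j_2<\dots<j_{n-k}\}$ (so $j_{n-k}=n$) and set $C(m_1,\dots,m_k)=(n-j_1,\dots,n-j_{n-k-1})$. Then $C(C(m_1,\dots,m_k))=(m_1,\dots,m_k)$. Write \[ \omega_{m_1,\dots,m_k}:=d_{m_1}\cdots d_{m_k}\Delta=\sum_{1\le i_1<\dots<i_k\le n}h^{m_1\dots m_k}_{i_1\dots i_k}\,dx_{i_1}\wedge\cdots\wedge dx_{i_k}, \] where $\Delta=\prod_{1\le i<j\le n}(x_i-x_j)$. Then the coefficient of the monomial $x_1^{n-j_1}x_2^{n-j_2}\cdots x_{n-k-1}^{n-j_{n-k-1}}$ in $h^{m_1\dots m_k}_{n-k+1,n-k+2,\dots,n}$ is $\pm k!\,m_1!\cdots m_k!$. Finally, if $n-1\ge r_1>\dots>r_k\ge1$ and this monomial occurs with non-zero coefficient in $h^{r_1\dots r_k}_{n-k+1,n-k+2,\dots,n}$, then $r_i=m_i$ for all $i=1,\dots,k$.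
   Context: Forms live in $\mathbb{R}[x_1,\dots,x_n]\otimes\wedge\mathbb{R}^n$. With $\partial_i=\partial/\partial x_i$, $d_j(h\,dx_{i_1}\wedge\cdots\wedge dx_{i_k})=\sum_{l=1}^n(\partial_l^jh)\,dx_l\wedge dx_{i_1}\wedge\cdots\wedge dx_{i_k}$, extended linearly. *)

theory Defs
  imports Complex_Main "HOL-Library.Poly_Mapping"
begin

type_synonym rpoly = "(nat \<Rightarrow>\<^sub>0 nat) \<Rightarrow>\<^sub>0 real"

definition var :: "nat \<Rightarrow> rpoly" where
  "var i = Poly_Mapping.single (Poly_Mapping.single i 1) 1"

definition coeff_of :: "rpoly \<Rightarrow> (nat \<Rightarrow>\<^sub>0 nat) \<Rightarrow> real" where
  "coeff_of p a = Poly_Mapping.lookup p a"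

definition pdiff :: "nat \<Rightarrow> rpoly \<Rightarrow> rpoly" where
  "pdiff i p = (\<Sum>a\<in>Poly_Mapping.keys p. Poly_Mapping.single (a - Poly_Mapping.single i 1)
                                   (Poly_Mapping.lookup p a * of_nat (Poly_Mapping.lookup a i)))"

(* Differential forms in R[x_1..x_n] \<otimes> \<wedge>R^n, represented by their coefficients:
  a form w is \<Sum>_I w I dx_I, I ranging over subsets of {1..n}, where dx_I is the wedge
  product of the dx_i, i \<in> I, in increasing order. *)
type_synonym rform = "nat set \<Rightarrow> rpoly"

(* d_j (h dx_I) = \<Sum>_l (\<partial>_l^j h) dx_l \<wedge> dx_I.  Since dx_l \<wedge> dx_I = 0 for l \<in> I and
  dx_l \<wedge> dx_I = (-1)^{#{i \<in> I. i < l}} dx_{I \<union> {l}} otherwise, the coefficient of dx_J in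
  d_j w is \<Sum>_{l \<in> J} (-1)^{#{i \<in> J. i < l}} \<partial>_l^j (w (J - {l})). *)
definition dj :: "nat \<Rightarrow> nat \<Rightarrow> rform \<Rightarrow> rform" where
  "dj n j w J = (if J \<subseteq> {1..n}
     then (\<Sum>l\<in>J. (-1) ^ card {i\<in>J. i < l} * (pdiff l ^^ j) (w (J - {l})))
     else 0)"

definition Delta :: "nat \<Rightarrow> rpoly" where
  "Delta n = (\<Prod>(i,j)\<in>{(i,j). 1 \<le> i \<and> i < j \<and> j \<le> n}. var i - var j)"

definition zero_form :: "rpoly \<Rightarrow> rform" where
  "zero_form h J = (if J = {} then h else 0)"

definition omega :: "nat \<Rightarrow> nat list \<Rightarrow> rform" where
  "omega n ms = foldr (dj n) ms (zero_form (Delta n))"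

definition Cmap :: "nat \<Rightarrow> nat list \<Rightarrow> nat list" where
  "Cmap n ms = map (\<lambda>j. n - j)
      (butlast (sorted_list_of_set ({1..n} - (\<lambda>m. n - m) ` set ms)))"

definition mono_exp :: "nat list \<Rightarrow> (nat \<Rightarrow>\<^sub>0 nat)" where
  "mono_exp cs = (\<Sum>t<length cs. Poly_Mapping.single (Suc t) (cs ! t))"

end

(*
  In d_{m_1} ... d_{m_k} Delta every d_{m_i} differentiates in a different variable of
  J = {n-k+1, ..., n}.  Hence the coefficient of a monomial x^a not involving these variables in
  the dx_J-component is a sum of k! terms, one for each assignment of the m_i to distinct
  variables of J, each equal to m_1! ... m_k! times the coefficient of Delta at a plus that
  assignment.  Since Delta is alternating, putting the exponents back in the order
  m_1, ..., m_k produces exactly the sign carried by d, so all k! terms agree.  For a = C(m) the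
  resulting exponent vector (C(m), 0, m_1, ..., m_k) is a permutation of 0, ..., n-1, where the
  Vandermonde product has coefficient +-1.  For any other r the vector (C(m), 0, r_1, ..., r_k)
  repeats an exponent, and the coefficient of the alternating Delta vanishes.
*)

theory Submission
  imports Defs "HOL-Combinatorics.Permutations"
begin

abbreviation lookup :: "('a \<Rightarrow>\<^sub>0 'b::zero) \<Rightarrow> 'a \<Rightarrow> 'b" where
  "lookup \<equiv> Poly_Mapping.lookup"

abbreviation single :: "'a \<Rightarrow> 'b::zero \<Rightarrow> 'a \<Rightarrow>\<^sub>0 'b" where
  "single \<equiv> Poly_Mapping.single"

abbreviation keys :: "('a \<Rightarrow>\<^sub>0 'b::zero) \<Rightarrow> 'a set" where
  "keys \<equiv> Poly_Mapping.keys"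

lemma poly_mapping_eq_sum_single:
  "p = (\<Sum>a\<in>keys p. single a (lookup p a))"
proof (rule poly_mapping_eqI)
  fix b
  have "lookup (\<Sum>a\<in>keys p. single a (lookup p a)) b
      = (\<Sum>a\<in>keys p. lookup p a when a = b)"
    by (simp add: lookup_sum lookup_single when_def eq_commute)
  also have "\<dots> = lookup p b"
    by (simp add: when_def in_keys_iff)
  finally show "lookup p b = lookup (\<Sum>a\<in>keys p. single a (lookup p a)) b" ..
qed

locale poly_ring_hom =
  fixes H :: "('a::comm_monoid_add \<Rightarrow>\<^sub>0 'b::comm_ring_1) \<Rightarrow> ('a \<Rightarrow>\<^sub>0 'b)"
  assumes hom_add: "H (p + q) = H p + H q"
    and hom_one: "H 1 = 1"
    and hom_mult_single: "H (single a c * single b d)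
      = H (single a c) * H (single b d)"
begin

lemma hom_zero: "H 0 = 0"
  using hom_add[of 0 0] by simp

lemma hom_sum: "H (sum f A) = (\<Sum>x\<in>A. H (f x))"
  by (induction A rule: infinite_finite_induct) (simp_all add: hom_zero hom_add)

lemma hom_uminus: "H (- p) = - H p"
  using hom_add[of "- p" p] by (simp add: hom_zero eq_neg_iff_add_eq_0)

lemma hom_diff: "H (p - q) = H p - H q"
  using hom_add[of p "- q"] by (simp add: hom_uminus)

lemma hom_mult: "H (p * q) = H p * H q"
proof -
  let ?S = "\<lambda>p. \<Sum>a\<in>keys p. single a (lookup p a)"
  have "H (?S p * ?S q) = H (?S p) * H (?S q)"
    by (simp add: sum_product hom_sum hom_mult_single)
  then show ?thesis
    by (simp flip: poly_mapping_eq_sum_single)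
qed

lemma hom_prod: "H (prod f A) = (\<Prod>x\<in>A. H (f x))"
  by (induction A rule: infinite_finite_induct) (simp_all add: hom_one hom_mult)

lemma hom_power: "H (p ^ m) = H p ^ m"
  by (induction m) (simp_all add: hom_one hom_mult)

end

definition swap_exp :: "'a \<Rightarrow> 'a \<Rightarrow> ('a \<Rightarrow>\<^sub>0 'b::zero) \<Rightarrow> ('a \<Rightarrow>\<^sub>0 'b)" where
  "swap_exp i j a = Poly_Mapping.map_key (transpose i j) a"

lemma lookup_swap_exp [simp]:
  "lookup (swap_exp i j a) k = lookup a (transpose i j k)"
  by (simp add: swap_exp_def map_key.rep_eq inj_transpose)

lemma swap_exp_swap_exp [simp]: "swap_exp i j (swap_exp i j a) = a"
  by (rule poly_mapping_eqI) simp

lemma swap_exp_add: "swap_exp i j (a + b) = swap_exp i j a + swap_exp i j b"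
  by (rule poly_mapping_eqI) (simp add: lookup_add)

lemma swap_exp_single [simp]:
  "swap_exp i j (single k v) = single (transpose i j k) v"
proof (rule poly_mapping_eqI)
  fix l
  have "k = transpose i j l \<longleftrightarrow> transpose i j k = l"
    by auto
  then show "lookup (swap_exp i j (single k v)) l
      = lookup (single (transpose i j k) v) l"
    by (simp add: lookup_single)
qed

lemma swap_exp_eq_0_iff [simp]: "swap_exp i j a = 0 \<longleftrightarrow> a = 0"
  by (metis swap_exp_swap_exp swap_exp_def inj_transpose map_key_zero)

lemma inj_swap_exp: "inj (swap_exp i j)"
  by (metis injI swap_exp_swap_exp)

definition swap_vars :: "'a \<Rightarrow> 'a \<Rightarrow> (('a \<Rightarrow>\<^sub>0 nat) \<Rightarrow>\<^sub>0 'b::zero) \<Rightarrow> (('a \<Rightarrow>\<^sub>0 nat) \<Rightarrow>\<^sub>0 'b)" where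
  "swap_vars i j p = Poly_Mapping.map_key (swap_exp i j) p"

lemma lookup_swap_vars [simp]:
  "lookup (swap_vars i j p) a = lookup p (swap_exp i j a)"
  by (simp add: swap_vars_def map_key.rep_eq inj_swap_exp)

lemma swap_vars_single [simp]:
  "swap_vars i j (single a c) = single (swap_exp i j a) c"
  by (rule poly_mapping_eqI) (auto simp: lookup_single when_def)

interpretation swap_vars: poly_ring_hom "swap_vars i j"
proof
  show "swap_vars i j (p + q) = swap_vars i j p + swap_vars i j q"
    for p q :: "('a \<Rightarrow>\<^sub>0 nat) \<Rightarrow>\<^sub>0 'b"
    by (rule poly_mapping_eqI) (simp add: lookup_add)
  show "swap_vars i j 1 = (1 :: ('a \<Rightarrow>\<^sub>0 nat) \<Rightarrow>\<^sub>0 'b)"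
    by (rule poly_mapping_eqI) (simp add: lookup_one)
qed (simp add: mult_single swap_exp_add)

lemma swap_vars_var [simp]: "swap_vars i j (var k) = var (transpose i j k)"
  by (simp add: var_def)

definition subst_var_zero :: "'a \<Rightarrow> (('a \<Rightarrow>\<^sub>0 nat) \<Rightarrow>\<^sub>0 'b::zero) \<Rightarrow> (('a \<Rightarrow>\<^sub>0 nat) \<Rightarrow>\<^sub>0 'b)" where
  "subst_var_zero i p = Poly_Mapping.mapp (\<lambda>a c. c when lookup a i = 0) p"

lemma lookup_subst_var_zero [simp]:
  "lookup (subst_var_zero i p) a = (lookup p a when lookup a i = 0)"
  by (simp add: subst_var_zero_def lookup_mapp in_keys_iff when_def)

lemma subst_var_zero_single:
  "subst_var_zero i (single a c) = (single a c when lookup a i = 0)"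
  by (rule poly_mapping_eqI) (simp add: lookup_single when_def)

interpretation subst_var_zero: poly_ring_hom "subst_var_zero i"
  by unfold_locales
    (simp_all add: poly_mapping_eq_iff fun_eq_iff lookup_add lookup_one mult_single
      subst_var_zero_single when_def)

lemma subst_var_zero_var [simp]: "subst_var_zero i (var k) = (if k = i then 0 else var k)"
  by (simp add: var_def subst_var_zero_single lookup_single)

definition alternating_on :: "'a set \<Rightarrow> (('a \<Rightarrow>\<^sub>0 nat) \<Rightarrow>\<^sub>0 'b::ab_group_add) \<Rightarrow> bool" where
  "alternating_on S p \<longleftrightarrow> (\<forall>i\<in>S. \<forall>j\<in>S. i \<noteq> j \<longrightarrow> swap_vars i j p = - p)"

lemma lookup_swap_exp_alternating:
  assumes "alternating_on S p" "i \<in> S" "j \<in> S" "i \<noteq> j"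
  shows "lookup p (swap_exp i j a) = - lookup p a"
  using assms by (metis alternating_on_def lookup_swap_vars lookup_uminus)

lemma lookup_alternating_eq_0:
  fixes p :: "('a \<Rightarrow>\<^sub>0 nat) \<Rightarrow>\<^sub>0 'b::linordered_ab_group_add"
  assumes "alternating_on S p" "i \<in> S" "j \<in> S" "i \<noteq> j"
    and "lookup a i = lookup a j"
  shows "lookup p a = 0"
proof -
  have "swap_exp i j a = a"
    by (rule poly_mapping_eqI) (simp add: assms(5) transpose_def)
  then show ?thesis
    using lookup_swap_exp_alternating[OF assms(1-4), of a] by simp
qed

lemma prod_uminus: "(\<Prod>x\<in>A. - f x) = (-1) ^ card A * (prod f A :: 'a::comm_ring_1)"
  by (induction A rule: infinite_finite_induct) simp_all

definition vandermonde :: "nat set \<Rightarrow> rpoly" where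
  "vandermonde S = (\<Prod>(i, j)\<in>{(i, j). i \<in> S \<and> j \<in> S \<and> i < j}. var i - var j)"

lemma Delta_eq_vandermonde: "Delta n = vandermonde {1..n}"
  unfolding Delta_def vandermonde_def by (rule prod.cong) auto

lemma vandermonde_remove:
  assumes "finite S" "i \<in> S"
  shows "vandermonde S
    = (-1) ^ card {j\<in>S. j < i} * vandermonde (S - {i}) * (\<Prod>j\<in>S - {i}. var i - var j)"
proof -
  define f where "f = (\<lambda>(i::nat, j::nat). var i - var j)"
  define pairs where "pairs S = {(i, j). i \<in> S \<and> j \<in> S \<and> i < j}" for S :: "nat set"
  define L where "L = {j\<in>S. j < i}"
  define R where "R = {j\<in>S. i < j}"
  have fin: "finite L" "finite R" "finite (pairs (S - {i}))"
    using assms(1) by (auto simp: L_def R_def pairs_def intro: finite_subset[of _ "S \<times> S"])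
  have "pairs S = pairs (S - {i}) \<union> ((\<lambda>j. (j, i)) ` L \<union> (\<lambda>j. (i, j)) ` R)"
    using assms(2) by (auto simp: pairs_def L_def R_def)
  then have "vandermonde S
      = prod f (pairs (S - {i})) * prod f ((\<lambda>j. (j, i)) ` L \<union> (\<lambda>j. (i, j)) ` R)"
    unfolding vandermonde_def f_def[symmetric] pairs_def[symmetric]
    by (simp only:) (rule prod.union_disjoint, use fin in \<open>auto simp: pairs_def L_def R_def\<close>)
  also have "prod f ((\<lambda>j. (j, i)) ` L \<union> (\<lambda>j. (i, j)) ` R)
      = prod f ((\<lambda>j. (j, i)) ` L) * prod f ((\<lambda>j. (i, j)) ` R)"
    using fin by (intro prod.union_disjoint) (auto simp: L_def R_def)
  finally have "vandermonde S
      = prod f (pairs (S - {i})) * (prod f ((\<lambda>j. (j, i)) ` L) * prod f ((\<lambda>j. (i, j)) ` R))" .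
  moreover have "prod f ((\<lambda>j. (j, i)) ` L) = (-1) ^ card L * (\<Prod>j\<in>L. var i - var j)"
  proof -
    have "prod f ((\<lambda>j. (j, i)) ` L) = (\<Prod>j\<in>L. var j - var i)"
      by (subst prod.reindex) (auto simp: inj_on_def f_def)
    then show ?thesis
      using prod_uminus[of "\<lambda>j. var i - var j" L] by simp
  qed
  moreover have "prod f ((\<lambda>j. (i, j)) ` R) = (\<Prod>j\<in>R. var i - var j)"
    by (subst prod.reindex) (auto simp: inj_on_def f_def)
  moreover have "prod f (pairs (S - {i})) = vandermonde (S - {i})"
    by (simp add: vandermonde_def f_def pairs_def)
  moreover have "(\<Prod>j\<in>S - {i}. var i - var j) = (\<Prod>j\<in>L. var i - var j) * (\<Prod>j\<in>R. var i - var j)"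
  proof -
    have "S - {i} = L \<union> R" "L \<inter> R = {}"
      by (auto simp: L_def R_def)
    then show ?thesis
      using fin by (simp add: prod.union_disjoint)
  qed
  ultimately show ?thesis
    by (simp only: L_def mult_ac)
qed

lemma swap_vars_vandermonde:
  assumes "finite S" "a \<in> S" "b \<in> S" "a \<noteq> b"
  shows "swap_vars a b (vandermonde S) = - vandermonde S"
  using assms
proof (induction "card S" arbitrary: S rule: less_induct)
  case less
  show ?case
  proof (cases "S = {a, b}")
    case True
    then have "{(i, j). i \<in> S \<and> j \<in> S \<and> i < j} = (if a < b then {(a, b)} else {(b, a)})"
      using \<open>a \<noteq> b\<close> by auto
    then show ?thesis
      by (simp add: vandermonde_def swap_vars.hom_diff)
  next
    case False
    then obtain i where i: "i \<in> S" "i \<noteq> a" "i \<noteq> b"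
      using less.prems by blast
    have "card (S - {i}) < card S"
      using less.prems(1) i(1) by (rule card_Diff1_less)
    then have IH: "swap_vars a b (vandermonde (S - {i})) = - vandermonde (S - {i})"
      using less.prems i by (intro less.hyps) auto
    have "swap_vars a b (\<Prod>j\<in>S - {i}. var i - var j) = (\<Prod>j\<in>S - {i}. var i - var (transpose a b j))"
      using i by (simp add: swap_vars.hom_prod swap_vars.hom_diff)
    also have "\<dots> = (\<Prod>j\<in>S - {i}. var i - var j)"
      using less.prems i by (intro prod.permute[symmetric, unfolded comp_def] permutes_swap_id) auto
    finally show ?thesis
      unfolding vandermonde_remove[OF less.prems(1) i(1)]
      by (simp add: swap_vars.hom_mult swap_vars.hom_power swap_vars.hom_uminus swap_vars.hom_one IH)
  qed
qed

lemma alternating_on_vandermonde: "finite S \<Longrightarrow> alternating_on S (vandermonde S)"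
  by (simp add: alternating_on_def swap_vars_vandermonde)

lemma prod_var: "finite T \<Longrightarrow> (\<Prod>j\<in>T. var j) = single (\<Sum>j\<in>T. single j 1) 1"
  by (induction T rule: finite_induct) (simp_all add: var_def mult_single)

lemma subst_var_zero_vandermonde:
  assumes "finite S" "i \<in> S"
  shows "subst_var_zero i (vandermonde S) = (-1) ^ (card {j\<in>S. j < i} + card (S - {i}))
    * vandermonde (S - {i}) * single (\<Sum>j\<in>S - {i}. single j 1) 1"
proof -
  have "subst_var_zero i (vandermonde (S - {i})) = vandermonde (S - {i})"
    unfolding vandermonde_def subst_var_zero.hom_prod by (intro prod.cong) (auto simp: subst_var_zero.hom_diff)
  moreover have "subst_var_zero i (\<Prod>j\<in>S - {i}. var i - var j) = (\<Prod>j\<in>S - {i}. - var j)"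
    unfolding subst_var_zero.hom_prod by (intro prod.cong) (auto simp: subst_var_zero.hom_diff)
  ultimately show ?thesis
    using assms by (simp add: vandermonde_remove subst_var_zero.hom_mult subst_var_zero.hom_power
        subst_var_zero.hom_uminus subst_var_zero.hom_one prod_uminus prod_var power_add mult_ac)
qed

lemma lookup_mult_single_add:
  fixes p :: "'a::cancel_comm_monoid_add \<Rightarrow>\<^sub>0 'b::semiring_0"
  shows "lookup (p * single u c) (a + u) = lookup p a * c"
proof -
  have "p * single u c
      = (\<Sum>b\<in>keys p. single (b + u) (lookup p b * c))"
    by (subst poly_mapping_eq_sum_single[of p]) (simp add: sum_distrib_right mult_single)
  then show ?thesis
    by (simp add: lookup_sum lookup_single when_def in_keys_iff)
qed

lemma lookup_neg_one_power_mult: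
  fixes p :: "'a::comm_monoid_add \<Rightarrow>\<^sub>0 'b::comm_ring_1"
  shows "lookup ((-1) ^ m * p) a = (-1) ^ m * lookup p a"
  by (induction m) simp_all

lemma bij_betw_pred_remove_zero:
  assumes "bij_betw f S {..<card S}" "finite S" "i \<in> S" "f i = 0"
  shows "bij_betw (\<lambda>j. f j - 1) (S - {i}) {..<card (S - {i})}"
proof -
  have "bij_betw f (S - {i}) ({..<card S} - {0})"
    using assms by (intro bij_betw_DiffI) (auto simp: bij_betw_def)
  moreover have "bij_betw (\<lambda>x. x - 1) ({..<card S} - {0}) {..<card (S - {i})}"
    using assms by (intro bij_betw_imageI) (auto simp: inj_on_def image_iff intro!: bexI[of _ "Suc _"])
  ultimately show ?thesis
    by (rule bij_betw_trans[unfolded comp_def])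
qed

lemma lookup_vandermonde_add_ones:
  assumes "finite S" "i \<in> S" "lookup e i = 0"
  shows "lookup (vandermonde S) (e + (\<Sum>j\<in>S - {i}. single j 1))
    = (-1) ^ (card {j\<in>S. j < i} + card (S - {i})) * lookup (vandermonde (S - {i})) e"
proof -
  let ?u = "\<Sum>j\<in>S - {i}. single j (1::nat)"
  have "lookup (e + ?u) i = 0"
    using assms(1,3) by (simp add: lookup_add lookup_sum lookup_single)
  then have "lookup (vandermonde S) (e + ?u)
      = lookup (subst_var_zero i (vandermonde S)) (e + ?u)"
    by simp
  also have "\<dots> = (-1) ^ (card {j\<in>S. j < i} + card (S - {i})) * lookup (vandermonde (S - {i})) e"
    unfolding subst_var_zero_vandermonde[OF assms(1,2)]
    by (rule lookup_mult_single_add[THEN trans]) (simp add: lookup_neg_one_power_mult)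
  finally show ?thesis .
qed

lemma lookup_vandermonde_bij:
  assumes "finite S" "keys e \<subseteq> S" "bij_betw (lookup e) S {..<card S}"
  shows "lookup (vandermonde S) e \<in> {1, -1}"
  using assms
proof (induction "card S" arbitrary: S e rule: less_induct)
  case less
  show ?case
  proof (cases "S = {}")
    case True
    then show ?thesis
      using less.prems(2) by (simp add: vandermonde_def)
  next
    case False
    then obtain i where i: "i \<in> S" "lookup e i = 0"
      using less.prems(1,3) by (metis bij_betw_iff_bijections card_gt_0_iff lessThan_iff)
    define u where "u = (\<Sum>j\<in>S - {i}. single j (1::nat))"
    have lookup_u: "lookup u j = (if j \<in> S - {i} then 1 else 0)" for j
      unfolding u_def using less.prems(1) by (simp add: lookup_sum lookup_single when_def)
    have pos: "lookup e j \<noteq> 0" if "j \<in> S - {i}" for j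
      using less.prems(3) i that by (metis DiffE bij_betw_def inj_on_contraD singletonI)
    define e' where "e' = e - u"
    have lookup_e': "lookup e' j = (if j \<in> S - {i} then lookup e j - 1 else lookup e j)" for j
      by (simp add: e'_def lookup_minus lookup_u)
    have e: "e = e' + u"
      by (rule poly_mapping_eqI) (use pos in \<open>auto simp: lookup_e' lookup_add lookup_u\<close>)
    have "keys e' \<subseteq> S - {i}"
      using less.prems(2) i by (auto simp: in_keys_iff lookup_e' split: if_splits)
    moreover have "bij_betw (lookup e') (S - {i}) {..<card (S - {i})}"
      using bij_betw_pred_remove_zero[OF less.prems(3,1) i]
      by (rule bij_betw_cong[THEN iffD1, rotated]) (simp add: lookup_e')
    moreover have "card (S - {i}) < card S"
      using less.prems(1) i(1) by (rule card_Diff1_less)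
    ultimately have "lookup (vandermonde (S - {i})) e' \<in> {1, -1}"
      using less.prems(1) by (intro less.hyps) auto
    moreover have "lookup (vandermonde S) e
        = (-1) ^ (card {j\<in>S. j < i} + card (S - {i})) * lookup (vandermonde (S - {i})) e'"
      unfolding e u_def using less.prems(1) i by (intro lookup_vandermonde_add_ones) (simp_all add: lookup_e')
    ultimately show ?thesis
      by (auto simp: minus_one_power_iff)
  qed
qed

lemma lookup_pdiff:
  "lookup (pdiff i p) a
    = lookup p (a + single i 1) * real (lookup a i + 1)"
proof -
  let ?c = "\<lambda>b. lookup p b * real (lookup b i)"
  have "(?c b when b - single i 1 = a) = (?c b when b = a + single i 1)" for b
  proof (cases "lookup b i = 0")
    case True
    then have "b \<noteq> a + single i 1"
      by (auto simp: lookup_add)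
    with True show ?thesis
      by simp
  next
    case False
    then have "b - single i 1 = a \<longleftrightarrow> b = a + single i 1"
      by (auto simp: poly_mapping_eq_iff fun_eq_iff lookup_add lookup_minus lookup_single when_def)
    then show ?thesis
      by simp
  qed
  then have "lookup (pdiff i p) a
      = (\<Sum>b\<in>keys p. ?c b when b = a + single i 1)"
    by (simp add: pdiff_def lookup_sum lookup_single eq_commute)
  then show ?thesis
    by (simp add: when_def in_keys_iff lookup_add)
qed

lemma lookup_pdiff_funpow:
  "lookup ((pdiff i ^^ m) p) a
    = lookup p (a + single i m) * pochhammer (real (lookup a i) + 1) m"
proof (induction m arbitrary: p)
  case 0
  then show ?case by simp
next
  case (Suc m)
  have "lookup ((pdiff i ^^ Suc m) p) a = lookup ((pdiff i ^^ m) (pdiff i p)) a"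
    by (simp only: funpow_Suc_right comp_def)
  also have "\<dots> = lookup p (a + single i m + single i 1)
      * real (lookup a i + m + 1) * pochhammer (real (lookup a i) + 1) m"
    by (simp add: Suc.IH lookup_pdiff lookup_add)
  finally show ?case
    by (simp add: pochhammer_Suc algebra_simps flip: single_add)
qed

fun exps_at :: "'a list \<Rightarrow> nat list \<Rightarrow> ('a \<Rightarrow>\<^sub>0 nat)" where
  "exps_at (x # xs) (v # vs) = single x v + exps_at xs vs"
| "exps_at _ _ = 0"

lemma lookup_exps_at_notin: "i \<notin> set xs \<Longrightarrow> lookup (exps_at xs vs) i = 0"
  by (induction xs vs rule: exps_at.induct) (auto simp: lookup_add lookup_single)

lemma lookup_exps_at_nth:
  "distinct xs \<Longrightarrow> length vs = length xs \<Longrightarrow> t < length xs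
    \<Longrightarrow> lookup (exps_at xs vs) (xs ! t) = vs ! t"
proof (induction xs vs arbitrary: t rule: exps_at.induct)
  case (1 x xs v vs)
  show ?case
  proof (cases t)
    case 0
    with 1 show ?thesis
      by (simp add: lookup_add lookup_exps_at_notin)
  next
    case (Suc t')
    with 1 have "xs ! t' \<noteq> x"
      using nth_mem by fastforce
    with 1 Suc show ?thesis
      by (simp add: lookup_add lookup_single)
  qed
qed auto

lemma exps_at_append:
  "length xs = length vs \<Longrightarrow> exps_at (xs @ ys) (vs @ ws) = exps_at xs vs + exps_at ys ws"
  by (induction xs vs rule: list_induct2) (simp_all add: add.assoc)

lemma exps_at_swap:
  assumes "distinct (xs @ i # j # ys)" "length vs = length (xs @ i # j # ys)"
  shows "exps_at (xs @ i # j # ys) vs = swap_exp i j (exps_at (xs @ j # i # ys) vs)"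
  using assms
proof (induction xs arbitrary: vs)
  case Nil
  then obtain v w vs' where "vs = v # w # vs'"
    by (metis Suc_length_conv append_Nil)
  moreover have "swap_exp i j (exps_at ys vs') = exps_at ys vs'"
    using Nil.prems(1) by (intro poly_mapping_eqI) (auto simp: transpose_def lookup_exps_at_notin)
  ultimately show ?case
    by (simp add: swap_exp_add add_ac)
next
  case (Cons x xs)
  then obtain v vs' where "vs = v # vs'"
    by (metis Suc_length_conv append_Cons)
  moreover have "transpose i j x = x"
    using Cons.prems(1) by auto
  ultimately show ?case
    using Cons by (simp add: swap_exp_add)
qed

lemma mono_exp_eq_exps_at: "mono_exp xs = exps_at [1..<Suc (length xs)] xs"
proof (induction xs rule: rev_induct)
  case (snoc x xs)
  have "mono_exp (xs @ [x]) = mono_exp xs + single (Suc (length xs)) x"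
    by (simp add: mono_exp_def nth_append)
  moreover have "[1..<Suc (length (xs @ [x]))] = [1..<Suc (length xs)] @ [Suc (length xs)]"
    by simp
  ultimately show ?case
    using snoc by (simp add: exps_at_append del: upt_Suc)
qed (simp add: mono_exp_def)

lemma lookup_alternating_move:
  fixes p :: "('a \<Rightarrow>\<^sub>0 nat) \<Rightarrow>\<^sub>0 'b::ring_1"
  assumes "alternating_on S p" "distinct (xs @ l # ys @ zs)" "set (xs @ l # ys @ zs) \<subseteq> S"
    and "\<forall>i\<in>set (xs @ l # ys @ zs). lookup a i = 0"
    and "length vs = length (xs @ l # ys @ zs)"
  shows "lookup p (a + exps_at (xs @ l # ys @ zs) vs)
    = (-1) ^ length ys * lookup p (a + exps_at (xs @ ys @ l # zs) vs)"
  using assms(2-5)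
proof (induction ys arbitrary: xs)
  case Nil
  then show ?case by simp
next
  case (Cons y ys)
  have "swap_exp l y a = a"
    using Cons.prems(3) by (intro poly_mapping_eqI) (simp add: transpose_def)
  then have "a + exps_at (xs @ l # y # ys @ zs) vs = swap_exp l y (a + exps_at (xs @ y # l # ys @ zs) vs)"
    using Cons.prems by (simp add: swap_exp_add exps_at_swap)
  then have "lookup p (a + exps_at (xs @ l # y # ys @ zs) vs)
      = - lookup p (a + exps_at ((xs @ [y]) @ l # ys @ zs) vs)"
    using Cons.prems(1,2) by (simp add: lookup_swap_exp_alternating[OF assms(1)])
  also have "\<dots> = - ((-1) ^ length ys * lookup p (a + exps_at ((xs @ [y]) @ ys @ l # zs) vs))"
    using Cons.prems by (subst Cons.IH) auto
  finally show ?case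
    by simp
qed

lemma lookup_alternating_insort:
  fixes p :: "('a::linorder \<Rightarrow>\<^sub>0 nat) \<Rightarrow>\<^sub>0 'b::ring_1"
  assumes "alternating_on S p" "J \<subseteq> S" "finite J" "l \<in> J"
    and "\<forall>i\<in>J. lookup a i = 0" "length vs = card J - 1"
  shows "lookup p (a + single l v + exps_at (sorted_list_of_set (J - {l})) vs)
    = (-1) ^ card {i\<in>J. i < l} * lookup p (a + exps_at (sorted_list_of_set J) (v # vs))"
proof -
  obtain xs ys where J: "sorted_list_of_set J = xs @ l # ys"
    using assms(3,4) by (metis set_sorted_list_of_set split_list)
  have sorted: "sorted_wrt (<) (xs @ l # ys)"
    by (metis J sorted_list_of_set.strict_sorted_key_list_of_set)
  then have "l \<notin> set xs"
    by (auto simp: sorted_wrt_append)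
  then have "sorted_list_of_set (J - {l}) = xs @ ys"
    using assms(3) by (simp add: sorted_list_of_set_remove J remove1_append)
  moreover have J_set: "J = set (xs @ l # ys)"
    using assms(3) by (metis J set_sorted_list_of_set)
  then have "{i\<in>J. i < l} = set xs"
    using sorted by (auto simp: sorted_wrt_append)
  moreover have "length vs = length (xs @ ys)"
    using assms(6) sorted by (metis J length_sorted_list_of_set length_append length_Cons diff_Suc_1 add_Suc_right)
  moreover have "lookup p (a + exps_at ([] @ l # xs @ ys) (v # vs))
      = (-1) ^ length xs * lookup p (a + exps_at ([] @ xs @ l # ys) (v # vs))"
    using assms(2,5) J_set sorted strict_sorted_iff[of "xs @ l # ys"] \<open>length vs = length (xs @ ys)\<close>
    by (intro lookup_alternating_move[OF assms(1)]) auto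
  ultimately show ?thesis
    using sorted strict_sorted_iff[of "xs @ l # ys"] by (simp add: J distinct_card add_ac)
qed

lemma lookup_foldr_dj_zero_form:
  assumes "alternating_on {1..n} p" "J \<subseteq> {1..n}" "card J = length ms"
    and "\<forall>l\<in>J. lookup a l = 0"
  shows "lookup (foldr (dj n) ms (zero_form p) J) a
    = real (fact (length ms) * (\<Prod>m\<leftarrow>ms. fact m)) * lookup p (a + exps_at (sorted_list_of_set J) ms)"
  using assms(2-4)
proof (induction ms arbitrary: J a)
  case Nil
  then have "J = {}"
    using finite_subset by fastforce
  then show ?case
    by (simp add: zero_form_def)
next
  case (Cons m ms)
  let ?w = "foldr (dj n) ms (zero_form p)"
  define c where "c = real (fact (length ms) * (\<Prod>m\<leftarrow>ms. fact m)) * fact m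
    * lookup p (a + exps_at (sorted_list_of_set J) (m # ms))"
  have fin: "finite J"
    using Cons.prems(1) finite_subset by blast
  have "lookup (foldr (dj n) (m # ms) (zero_form p) J) a
      = (\<Sum>l\<in>J. (-1) ^ card {i\<in>J. i < l} * lookup ((pdiff l ^^ m) (?w (J - {l}))) a)"
    using Cons.prems(1) by (simp add: dj_def lookup_sum lookup_neg_one_power_mult)
  also have "\<dots> = (\<Sum>l\<in>J. c)"
  proof (rule sum.cong[OF refl])
    fix l
    assume l: "l \<in> J"
    have "lookup ((pdiff l ^^ m) (?w (J - {l}))) a
        = lookup (?w (J - {l})) (a + single l m) * fact m"
      using Cons.prems(3) l by (simp add: lookup_pdiff_funpow flip: pochhammer_fact)
    also have "lookup (?w (J - {l})) (a + single l m)
        = real (fact (length ms) * (\<Prod>m\<leftarrow>ms. fact m))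
          * lookup p (a + single l m + exps_at (sorted_list_of_set (J - {l})) ms)"
      using Cons.prems l fin by (intro Cons.IH) (auto simp: lookup_add lookup_single)
    also have "lookup p (a + single l m + exps_at (sorted_list_of_set (J - {l})) ms)
        = (-1) ^ card {i\<in>J. i < l} * lookup p (a + exps_at (sorted_list_of_set J) (m # ms))"
      using Cons.prems l fin by (intro lookup_alternating_insort[OF assms(1)]) auto
    finally show "(-1) ^ card {i\<in>J. i < l} * lookup ((pdiff l ^^ m) (?w (J - {l}))) a = c"
      by (simp add: c_def mult_ac flip: power_add)
  qed
  also have "\<dots> = real (fact (length (m # ms)) * (\<Prod>m\<leftarrow>m # ms. fact m))
      * lookup p (a + exps_at (sorted_list_of_set J) (m # ms))"
    using Cons.prems(2) by (simp add: c_def algebra_simps)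
  finally show ?case .
qed

lemma sorted_wrt_greater_unique:
  fixes xs ys :: "'a::linorder list"
  assumes "sorted_wrt (>) xs" "sorted_wrt (>) ys" "set xs = set ys"
  shows "xs = ys"
proof -
  have "sorted_wrt (<) (rev xs)" "sorted_wrt (<) (rev ys)"
    using assms by (simp_all add: sorted_wrt_rev)
  then have "rev xs = rev ys"
    using assms(3) by (intro sorted_distinct_set_unique) (auto simp: strict_sorted_iff)
  then show ?thesis
    by simp
qed

lemma distinct_if_sorted_wrt_greater: "sorted_wrt (>) (xs::'a::linorder list) \<Longrightarrow> distinct xs"
  by (induction xs) auto

lemma Cmap_eq:
  assumes "1 \<le> n" "\<forall>m\<in>set ms. 1 \<le> m \<and> m \<le> n - 1"
  shows "Cmap n ms = map (\<lambda>j. n - j) (sorted_list_of_set ({1..<n} - (\<lambda>m. n - m) ` set ms))"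
proof -
  let ?A = "{1..<n} - (\<lambda>m. n - m) ` set ms"
  have "{1..n} - (\<lambda>m. n - m) ` set ms = insert n ?A"
    using assms by auto
  then have "sorted_list_of_set ({1..n} - (\<lambda>m. n - m) ` set ms) = sorted_list_of_set ?A @ [n]"
    by (simp add: sorted_insort_is_snoc)
  then show ?thesis
    by (simp add: Cmap_def)
qed

lemma set_Cmap:
  assumes "1 \<le> n" "\<forall>m\<in>set ms. 1 \<le> m \<and> m \<le> n - 1"
  shows "set (Cmap n ms) = {1..n - 1} - set ms"
proof -
  let ?f = "\<lambda>j. n - j"
  have ff: "?f ` ?f ` X = X" if "X \<subseteq> {..n}" for X
    using that by (force simp: image_image intro: image_eqI)
  have "?f ` ?f ` {1..<n} = {1..<n}"
    by (rule ff) auto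
  moreover have "?f ` {1..<n} \<subseteq> {1..<n}"
    by auto
  ultimately have "?f ` {1..<n} = {1..<n}"
    by (metis image_mono subset_antisym)
  moreover have "?f ` ({1..<n} - ?f ` set ms) = ?f ` {1..<n} - ?f ` ?f ` set ms"
    using assms by (intro inj_on_image_set_diff[of _ "{1..<n}"]) (auto simp: inj_on_def)
  moreover have "?f ` ?f ` set ms = set ms"
    using assms(2) by (intro ff) auto
  ultimately have "set (Cmap n ms) = {1..<n} - set ms"
    using assms by (simp add: Cmap_eq)
  then show ?thesis
    by auto
qed

lemma sorted_wrt_Cmap:
  assumes "1 \<le> n" "\<forall>m\<in>set ms. 1 \<le> m \<and> m \<le> n - 1"
  shows "sorted_wrt (>) (Cmap n ms)"
proof -
  let ?L = "sorted_list_of_set ({1..<n} - (\<lambda>m. n - m) ` set ms)"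
  have "sorted_wrt (\<lambda>i j. n - j < n - i) ?L"
    by (rule sorted_wrt_mono_rel[OF _ sorted_list_of_set.strict_sorted_key_list_of_set]) auto
  then show ?thesis
    using assms by (simp add: Cmap_eq sorted_wrt_map)
qed

lemma Cmap_Cmap:
  assumes "1 \<le> n" "\<forall>m\<in>set ms. 1 \<le> m \<and> m \<le> n - 1" "sorted_wrt (>) ms"
  shows "Cmap n (Cmap n ms) = ms"
proof -
  have "\<forall>m\<in>set (Cmap n ms). 1 \<le> m \<and> m \<le> n - 1"
    using set_Cmap[OF assms(1,2)] by auto
  then show ?thesis
    using assms by (intro sorted_wrt_greater_unique) (auto simp: sorted_wrt_Cmap set_Cmap)
qed

lemma length_Cmap:
  assumes "1 \<le> n" "\<forall>m\<in>set ms. 1 \<le> m \<and> m \<le> n - 1" "distinct ms"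
  shows "length (Cmap n ms) = n - 1 - length ms"
proof -
  have "length (Cmap n ms) = card ({1..n - 1} - set ms)"
    using assms(1,2) distinct_if_sorted_wrt_greater[OF sorted_wrt_Cmap[OF assms(1,2)]]
    by (metis distinct_card set_Cmap)
  also have "\<dots> = n - 1 - length ms"
    using assms by (subst card_Diff_subset) (auto simp: distinct_card)
  finally show ?thesis .
qed

lemma eq_if_disjoint_Cmap:
  assumes "1 \<le> n" "\<forall>m\<in>set ms. 1 \<le> m \<and> m \<le> n - 1" "\<forall>r\<in>set rs. 1 \<le> r \<and> r \<le> n - 1"
    and "sorted_wrt (>) ms" "sorted_wrt (>) rs" "length rs = length ms"
    and "set rs \<inter> set (Cmap n ms) = {}"
  shows "rs = ms"
proof -
  have "set rs \<subseteq> set ms"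
    using assms(3,7) set_Cmap[OF assms(1,2)] by auto
  moreover have "card (set rs) = card (set ms)"
    using assms(4-6) by (simp add: distinct_card distinct_if_sorted_wrt_greater)
  ultimately have "set rs = set ms"
    by (simp add: card_subset_eq)
  then show ?thesis
    using assms(4,5) by (simp add: sorted_wrt_greater_unique)
qed

lemma lookup_mono_exp:
  "lookup (mono_exp xs) j = (if 1 \<le> j \<and> j \<le> length xs then xs ! (j - 1) else 0)"
proof (cases "1 \<le> j \<and> j \<le> length xs")
  case True
  then have "[1..<Suc (length xs)] ! (j - 1) = j"
    by (simp del: upt_Suc)
  then show ?thesis
    using True lookup_exps_at_nth[of "[1..<Suc (length xs)]" xs "j - 1"]
    by (auto simp: mono_exp_eq_exps_at simp del: upt_Suc)
qed (auto simp: mono_exp_eq_exps_at lookup_exps_at_notin)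

lemma lookup_vandermonde_mono_exp:
  assumes "length xs = n" "set xs = {..<n}"
  shows "lookup (vandermonde {1..n}) (mono_exp xs) \<in> {1, -1}"
proof (rule lookup_vandermonde_bij)
  show "keys (mono_exp xs) \<subseteq> {1..n}"
    using assms(1) by (auto simp: in_keys_iff lookup_mono_exp split: if_splits)
  have "bij_betw ((!) xs) {..<n} {..<n}"
    using assms by (intro bij_betw_nth) (auto simp: card_distinct)
  moreover have "bij_betw (\<lambda>j. j - 1) {1..n} {..<n}"
    by (intro bij_betw_imageI) (auto simp: inj_on_def image_iff intro!: bexI[of _ "Suc _"])
  ultimately have "bij_betw (\<lambda>j. xs ! (j - 1)) {1..n} {..<n}"
    using bij_betw_trans[unfolded comp_def] by blast
  then have "bij_betw (lookup (mono_exp xs)) {1..n} {..<n}"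
    by (rule bij_betw_cong[THEN iffD1, rotated]) (simp add: lookup_mono_exp assms(1))
  then show "bij_betw (lookup (mono_exp xs)) {1..n} {..<card {1..n}}"
    by simp
qed simp

lemma distinct_if_lookup_mono_exp_alternating_neq_0:
  fixes p :: "(nat \<Rightarrow>\<^sub>0 nat) \<Rightarrow>\<^sub>0 'b::linordered_ab_group_add"
  assumes "alternating_on {1..length xs} p" "lookup p (mono_exp xs) \<noteq> 0"
  shows "distinct xs"
proof (rule ccontr)
  assume "\<not> distinct xs"
  then obtain i j where "i < length xs" "j < length xs" "i \<noteq> j" "xs ! i = xs ! j"
    by (auto simp: distinct_conv_nth)
  then have "lookup p (mono_exp xs) = 0"
    by (intro lookup_alternating_eq_0[OF assms(1), of "Suc i" "Suc j"]) (auto simp: lookup_mono_exp)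
  with assms(2) show False ..
qed

lemma coeff_omega_mono_exp:
  assumes "length cs + length vs + 1 = n"
  shows "coeff_of (omega n vs {n - length vs + 1..n}) (mono_exp cs)
    = real (fact (length vs) * (\<Prod>v\<leftarrow>vs. fact v)) * lookup (Delta n) (mono_exp (cs @ 0 # vs))"
proof -
  let ?J = "{n - length vs + 1..n}"
  have "[1..<Suc n] = [1..<Suc (length cs)] @ [Suc (length cs)..<Suc n]"
    using assms upt_add_eq_append[of 1 "Suc (length cs)" "length vs"] by simp
  also have "[Suc (length cs)..<Suc n] = Suc (length cs) # [n - length vs + 1..<Suc n]"
    using assms by (subst upt_conv_Cons) (auto simp del: upt_Suc)
  finally have "mono_exp (cs @ 0 # vs) = mono_exp cs + exps_at (sorted_list_of_set ?J) vs"
    using assms by (simp add: mono_exp_eq_exps_at exps_at_append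
        flip: atLeastLessThanSuc_atLeastAtMost del: upt_Suc)
  moreover have "\<forall>l\<in>?J. lookup (mono_exp cs) l = 0"
    using assms by (auto simp: lookup_mono_exp)
  moreover have "alternating_on {1..n} (Delta n)"
    by (simp add: Delta_eq_vandermonde alternating_on_vandermonde)
  ultimately show ?thesis
    using assms by (simp add: coeff_of_def omega_def lookup_foldr_dj_zero_form)
qed

theorem lemma11:
  fixes n k :: nat and ms :: "nat list"
  assumes "n \<ge> 2" and "1 \<le> k" and "k \<le> n - 1"
    and "length ms = k" and "sorted_wrt (>) ms" and "\<forall>m\<in>set ms. 1 \<le> m \<and> m \<le> n - 1"
  shows "Cmap n (Cmap n ms) = ms
    \<and> coeff_of (omega n ms {n-k+1..n}) (mono_exp (Cmap n ms))
           \<in> {real (fact k * (\<Prod>m\<leftarrow>ms. fact m)), - real (fact k * (\<Prod>m\<leftarrow>ms. fact m))}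
    \<and> (\<forall>rs. length rs = k \<and> sorted_wrt (>) rs \<and> (\<forall>r\<in>set rs. 1 \<le> r \<and> r \<le> n - 1) \<and>
           coeff_of (omega n rs {n-k+1..n}) (mono_exp (Cmap n ms)) \<noteq> 0 \<longrightarrow> rs = ms)"
proof -
  have n: "1 \<le> n"
    using assms(1) by simp
  define cs where "cs = Cmap n ms"
  have cs: "set cs = {1..n - 1} - set ms" "length cs + k + 1 = n"
    using set_Cmap[OF n assms(6)] length_Cmap[OF n assms(6)] distinct_if_sorted_wrt_greater[OF assms(5)]
      assms(2-4) by (simp_all add: cs_def)
  have coeff: "coeff_of (omega n rs {n-k+1..n}) (mono_exp cs)
      = real (fact k * (\<Prod>r\<leftarrow>rs. fact r)) * lookup (Delta n) (mono_exp (cs @ 0 # rs))"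
    if "length rs = k" for rs
    using coeff_omega_mono_exp[of cs rs n] that cs(2) by simp
  have "lookup (Delta n) (mono_exp (cs @ 0 # ms)) \<in> {1, -1}"
    unfolding Delta_eq_vandermonde using cs assms(4,6) by (intro lookup_vandermonde_mono_exp) auto
  moreover have "rs = ms"
    if "length rs = k" "sorted_wrt (>) rs" "\<forall>r\<in>set rs. 1 \<le> r \<and> r \<le> n - 1"
      and "coeff_of (omega n rs {n-k+1..n}) (mono_exp cs) \<noteq> 0" for rs
  proof -
    have "distinct (cs @ 0 # rs)"
      using coeff[OF that(1)] that(1,4) cs(2)
      by (intro distinct_if_lookup_mono_exp_alternating_neq_0[of _ "Delta n"])
        (auto simp: Delta_eq_vandermonde alternating_on_vandermonde)
    then show "rs = ms"
      using eq_if_disjoint_Cmap[OF n assms(6) that(3) assms(5) that(2)] that(1) assms(4) by (auto simp: cs_def)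
  qed
  ultimately show ?thesis
    using Cmap_Cmap[OF n assms(6,5)] coeff[OF assms(4)] by (auto simp: cs_def)
qed

end
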